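(* Let $h$ be an integer with $1\le h\le u$. If $\beta$ is a root of $S(X)$ of multiplicity at least $2^h$, then for every $j\in\{0,1,\dots,2^h-1\}$ \[ 1+K\big(\eta_{j/2^h}\chi\big)\equiv 0\pmod{2\mathcal{P}\,\mathbb{Z}[\zeta_{2^hk}]}. \]
   Context: Let $p$ be an odd prime, $m\ge1$, $q=p^m$, $\alpha$ a primitive element of $\mathbb{F}_q$, and $T=q-1$; write $T=2^uT'$ with $u\ge1$ and $T'$ odd. The binary SLCE sequence $(s_n)_{n\ge0}$ is defined as follows: $s_n=1$ if $\alpha^n+1$ is a nonzero non-square of $\mathbb{F}_q$, and $s_n=0$ otherwise. Put $S(X)=\sum_{n=0}^{T-1}s_nX^n\in\mathbb{F}_2[X]$. Multiplicities of roots are taken in $\overline{\mathbb{F}_2}[X]$. Let $\beta$ be an element of an algebraic closure of $\mathbb{F}_2$ with $\beta^T=1$ and multiplicative order $k>1$ (so $k$ is odd). Let $f$ be the order of $2$ modulo $k$, and write $\zeta_N=e^{2\pi i/N}$. Let $\mathcal{P}$ be a prime ideal of $\mathbb{Z}[\zeta_k]$ containing $2$. Fix a field isomorphism $\phi:\mathbb{F}_2(\beta)=\mathbb{F}_{2^f}\to\mathbb{Z}[\zeta_k]/\mathcal{P}$, and let $\zeta$ be the unique complex $k$-th root of unity with $\phi(\beta)=\zeta+\mathcal{P}$. Multiplicative characters of $\mathbb{F}_q$ are homomorphisms $\mathbb{F}_q^*\to\mathbb{C}^*$, extended by value $0$ at $0$. For a rational $j$ with $(q-1)j\in\mathbb{Z}$,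 $\eta_j$ is the character with $\eta_j(\alpha)=e^{2\pi ij}$. Let $\rho=\eta_{1/2}$ be the quadratic character. Let $\chi$ be the character with $\chi(\alpha^n)=\zeta^n$. For a character $\psi$, set $K(\psi)=\sum_{x\in\mathbb{F}_q}\rho(x)\psi(1-x)$. For an ideal $I$ of $\mathbb{Z}[\zeta_k]$, $I\,\mathbb{Z}[\zeta_{2^hk}]$ is the ideal it generates in $\mathbb{Z}[\zeta_{2^hk}]$. *)

theory Defs
  imports Complex_Main "HOL-Library.Z2" "HOL-Algebra.Algebraic_Closure_Type" "HOL-Algebra.Generated_Fields"
begin

definition slce :: "'a::{field,finite} \<Rightarrow> nat \<Rightarrow> bool" where
  "slce \<alpha> n \<longleftrightarrow> \<alpha> ^ n + 1 \<noteq> 0 \<and> \<not> (\<exists>y. y * y = \<alpha> ^ n + 1)"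

definition slce_poly :: "'a::{field,finite} \<Rightarrow> bit poly" where
  "slce_poly \<alpha> = (\<Sum>n<card (UNIV :: 'a set) - 1. monom (if slce \<alpha> n then 1 else 0) n)"

definition dlog :: "'a::{field,finite} \<Rightarrow> 'a \<Rightarrow> nat" where
  "dlog \<alpha> x = (LEAST n. \<alpha> ^ n = x)"

definition mchar :: "'a::{field,finite} \<Rightarrow> complex \<Rightarrow> 'a \<Rightarrow> complex" where
  "mchar \<alpha> c x = (if x = 0 then 0 else c ^ dlog \<alpha> x)"

definition eta :: "'a::{field,finite} \<Rightarrow> real \<Rightarrow> 'a \<Rightarrow> complex" where
  "eta \<alpha> j = mchar \<alpha> (exp (2 * of_real pi * \<i> * of_real j))"

definition rho :: "'a::{field,finite} \<Rightarrow> 'a \<Rightarrow> complex" where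
  "rho \<alpha> = eta \<alpha> (1/2)"

definition Ksum :: "'a::{field,finite} \<Rightarrow> ('a \<Rightarrow> complex) \<Rightarrow> complex" where
  "Ksum \<alpha> \<psi> = (\<Sum>x\<in>UNIV. rho \<alpha> x * \<psi> (1 - x))"

definition zeta :: "nat \<Rightarrow> complex" where
  "zeta N = exp (2 * of_real pi * \<i> / of_nat N)"

definition Zzeta :: "nat \<Rightarrow> complex set" where
  "Zzeta N = {poly (map_poly of_int p) (zeta N) | p :: int poly. True}"

definition zring :: "nat \<Rightarrow> complex ring" where
  "zring N = \<lparr> carrier = Zzeta N, monoid.mult = (\<lambda>x y. x * y), one = 1,
               ring.zero = 0, add = (\<lambda>x y. x + y) \<rparr>"

abbreviation F2bar :: "bit alg_closure ring" where
  "F2bar \<equiv> ring_of_type_algebra"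

end

theory Submission
  imports Defs "HOL-Computational_Algebra.Primes"
begin

text \<open>
  Let S = {n < T. s_n = 1}. Counting the non-squares among the values \<alpha>^n + 1 turns
  1 + K(\<psi>), for a character \<psi> with \<psi>(\<alpha>) = c \<noteq> 1, into -\<psi>(-1) \<cdot> 2 \<cdot> \<Sum>_{n \<in> S} c^n.
  In characteristic 2 we have (X - \<beta>)^(2^h) = X^(2^h) - \<beta>^(2^h), and multiplying by this
  polynomial preserves the classes of exponents modulo 2^h. So if it divides S(X), then for each
  class r the sum of \<beta>^n over n \<in> S with n \<equiv> r vanishes, and transported through \<phi> the
  corresponding sum of \<zeta>^n lies in \<P>. The character \<eta>_{j/2^h} \<chi> takes the value c = \<omega>\<zeta>
  at \<alpha> with \<omega>^(2^h) = 1, and grouping \<Sum>_{n \<in> S} c^n by classes modulo 2^h writes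
  1 + K(\<eta>_{j/2^h} \<chi>) as a \<int>[\<zeta>_{2^h k}]-combination of elements of 2\<P>.
\<close>

section \<open>Characters of a finite field with a primitive element\<close>

lemma field_power_card_minus_1:
  fixes x :: "'a::{field,finite}"
  assumes "x \<noteq> 0"
  shows "x ^ (card (UNIV :: 'a set) - 1) = 1"
proof -
  let ?P = "\<Prod>y\<in>UNIV-{0::'a}. y"
  have "x ^ (card (UNIV :: 'a set) - 1) * ?P = (\<Prod>y\<in>UNIV-{0}. x * y)"
    by (simp add: prod.distrib card_Diff_singleton)
  also have "\<dots> = ?P"
    by (rule prod.reindex_bij_witness[of _ "\<lambda>y. y / x" "\<lambda>y. x * y"]) (use assms in auto)
  finally show ?thesis
    by (simp add: mult_cancel_right2)
qed

lemma power_mod_if_power_eq_1: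
  fixes x :: "'a::monoid_mult"
  assumes "x ^ m = 1"
  shows "x ^ (n mod m) = x ^ n"
proof -
  have "x ^ n = (x ^ m) ^ (n div m) * x ^ (n mod m)"
    by (metis div_mult_mod_eq power_add power_mult mult.commute)
  thus ?thesis using assms by simp
qed

lemma sum_power_root_of_unity:
  fixes c :: "'a::field"
  assumes "c ^ m = 1" "c \<noteq> 1"
  shows "(\<Sum>n<m. c ^ n) = 0"
  using assms by (simp add: sum_gp_strict)

lemma rho_eq_mchar: "rho \<alpha> = mchar \<alpha> (-1)"
proof -
  have "2 * complex_of_real pi * \<i> * complex_of_real (1 / 2) = complex_of_real pi * \<i>" by simp
  thus ?thesis unfolding rho_def eta_def by simp
qed

lemma eta_mult_mchar:
  "eta \<alpha> r x * mchar \<alpha> z x = mchar \<alpha> (exp (2 * of_real pi * \<i> * of_real r) * z) x"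
  unfolding eta_def mchar_def by (simp add: power_mult_distrib)

locale primitive_root =
  fixes \<alpha> :: "'a::{field,finite}" and T :: nat
  assumes T_def: "T = card (UNIV :: 'a set) - 1"
    and odd_card: "odd (card (UNIV :: 'a set))"
    and generates: "\<forall>x::'a. x \<noteq> 0 \<longrightarrow> (\<exists>n. x = \<alpha> ^ n)"
begin

lemma even_T: "even T"
  using odd_card by (simp add: T_def)

lemma T_ge_2: "T \<ge> 2"
proof -
  have "card {0, 1::'a} \<le> card (UNIV :: 'a set)" by (intro card_mono) auto
  thus ?thesis using odd_card unfolding T_def by simp presburger
qed

lemma alpha_nonzero: "\<alpha> \<noteq> 0"
proof
  assume "\<alpha> = 0"
  have "UNIV \<subseteq> {0, 1::'a}"
  proof
    fix x :: 'a
    show "x \<in> {0, 1}"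
    proof (cases "x = 0")
      case False
      then obtain n where "x = \<alpha> ^ n" using generates by blast
      with False \<open>\<alpha> = 0\<close> show ?thesis by (cases n) auto
    qed simp
  qed
  hence "card (UNIV :: 'a set) \<le> card {0, 1::'a}"
    by (intro card_mono) auto
  thus False using T_ge_2 by (simp add: T_def)
qed

lemma alpha_power_T: "\<alpha> ^ T = 1"
  using field_power_card_minus_1 alpha_nonzero by (simp add: T_def)

lemma alpha_power_mod: "\<alpha> ^ (n mod T) = \<alpha> ^ n"
  using alpha_power_T by (rule power_mod_if_power_eq_1)

lemma bij_alpha_power: "bij_betw (\<lambda>n. \<alpha> ^ n) {..<T} (UNIV - {0})"
proof -
  have image: "(\<lambda>n. \<alpha> ^ n) ` {..<T} = UNIV - {0}"
  proof
    show "UNIV - {0} \<subseteq> (\<lambda>n. \<alpha> ^ n) ` {..<T}"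
    proof
      fix x :: 'a assume "x \<in> UNIV - {0}"
      then obtain n where "x = \<alpha> ^ n" using generates by blast
      thus "x \<in> (\<lambda>n. \<alpha> ^ n) ` {..<T}"
        using alpha_power_mod T_ge_2 by (intro image_eqI[of _ _ "n mod T"]) auto
    qed
  qed (use alpha_nonzero in auto)
  hence "inj_on (\<lambda>n. \<alpha> ^ n) {..<T}"
    by (intro eq_card_imp_inj_on) (simp_all add: card_Diff_singleton T_def)
  with image show ?thesis by (simp add: bij_betw_def)
qed

lemma dlog_power: "dlog \<alpha> (\<alpha> ^ n) = n mod T"
  unfolding dlog_def
proof (rule Least_equality)
  show "\<alpha> ^ (n mod T) = \<alpha> ^ n" by (rule alpha_power_mod)
next
  fix m assume m: "\<alpha> ^ m = \<alpha> ^ n"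
  show "n mod T \<le> m"
  proof (rule ccontr)
    assume "\<not> n mod T \<le> m"
    moreover have "n mod T < T" using T_ge_2 by simp
    ultimately have "m < T" by linarith
    with \<open>n mod T < T\<close> m alpha_power_mod have "m = n mod T"
      using bij_betw_imp_inj_on[OF bij_alpha_power] by (simp add: inj_on_def)
    with \<open>\<not> n mod T \<le> m\<close> show False by simp
  qed
qed

lemma power_dlog:
  assumes "x \<noteq> 0"
  shows "\<alpha> ^ dlog \<alpha> x = x"
proof -
  obtain n where "x = \<alpha> ^ n" using generates assms by blast
  thus ?thesis using alpha_power_mod by (simp add: dlog_power)
qed

lemma sum_UNIV_alpha_power: "(\<Sum>x\<in>UNIV. g x) = g 0 + (\<Sum>n<T. g (\<alpha> ^ n))"
proof -
  have "(\<Sum>x\<in>UNIV. g x) = g 0 + (\<Sum>x\<in>UNIV - {0}. g x)"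
    by (simp add: sum.remove)
  also have "(\<Sum>x\<in>UNIV - {0}. g x) = (\<Sum>n<T. g (\<alpha> ^ n))"
    using sum.reindex_bij_betw[OF bij_alpha_power, of g] by simp
  finally show ?thesis .
qed

lemma mchar_power:
  assumes "c ^ T = 1"
  shows "mchar \<alpha> c (\<alpha> ^ n) = c ^ n"
  using assms alpha_nonzero by (simp add: mchar_def dlog_power power_mod_if_power_eq_1)

lemma mchar_mult:
  assumes "c ^ T = 1"
  shows "mchar \<alpha> c (x * y) = mchar \<alpha> c x * mchar \<alpha> c y"
proof (cases "x = 0 \<or> y = 0")
  case False
  then obtain a b where "x = \<alpha> ^ a" "y = \<alpha> ^ b" using generates by blast
  thus ?thesis using mchar_power[OF assms] by (simp flip: power_add)
qed (auto simp: mchar_def)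

lemma mchar_minus_1_squared:
  assumes "c ^ T = 1"
  shows "mchar \<alpha> c (-1) * mchar \<alpha> c (-1) = 1"
  using mchar_mult[OF assms, of "-1" "-1"] mchar_power[OF assms, of 0] by simp

lemma sum_mchar_mult:
  assumes "c ^ T = 1"
  shows "(\<Sum>x\<in>UNIV. mchar \<alpha> c x * f x) = (\<Sum>n<T. c ^ n * f (\<alpha> ^ n))"
  using assms by (simp add: sum_UNIV_alpha_power mchar_power, simp add: mchar_def)

lemma is_square_iff_even_dlog:
  assumes "y \<noteq> 0"
  shows "(\<exists>z. z * z = y) \<longleftrightarrow> even (dlog \<alpha> y)"
proof
  assume "\<exists>z. z * z = y"
  then obtain z where z: "z * z = y" by blast
  with assms obtain a where "z = \<alpha> ^ a" using generates by fastforce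
  with z have "y = \<alpha> ^ (2 * a)" by (simp add: mult_2 power_add)
  thus "even (dlog \<alpha> y)" using even_T by (simp add: dlog_power dvd_mod_iff)
next
  assume "even (dlog \<alpha> y)"
  then obtain m where "dlog \<alpha> y = 2 * m" by blast
  hence "\<alpha> ^ m * \<alpha> ^ m = y" using power_dlog[OF assms] by (simp add: mult_2 power_add)
  thus "\<exists>z. z * z = y" by blast
qed

lemma twice_slce:
  "2 * of_bool (slce \<alpha> n) = 1 - rho \<alpha> (\<alpha> ^ n + 1) - of_bool (\<alpha> ^ n + 1 = 0)"
proof (cases "\<alpha> ^ n + 1 = 0")
  case False
  hence "slce \<alpha> n \<longleftrightarrow> odd (dlog \<alpha> (\<alpha> ^ n + 1))"
    using is_square_iff_even_dlog unfolding slce_def by blast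
  with False show ?thesis
    unfolding rho_eq_mchar mchar_def by simp
qed (simp add: slce_def rho_eq_mchar mchar_def)

lemma sum_power_mult_rho:
  assumes c: "c ^ T = 1"
  shows "(\<Sum>n<T. c ^ n * rho \<alpha> (\<alpha> ^ n + 1)) = mchar \<alpha> c (-1) * Ksum \<alpha> (mchar \<alpha> c)"
proof -
  let ?\<psi> = "mchar \<alpha> c" and ?\<rho> = "rho \<alpha>"
  have "(\<Sum>n<T. c ^ n * ?\<rho> (\<alpha> ^ n + 1)) = (\<Sum>x\<in>UNIV. ?\<psi> x * ?\<rho> (x + 1))"
    using sum_mchar_mult[OF c] by simp
  also have "\<dots> = (\<Sum>y\<in>UNIV. ?\<psi> (- y) * ?\<rho> (1 - y))"
    by (rule sum.reindex_bij_witness[of _ uminus uminus]) (simp_all add: add.commute)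
  also have "\<dots> = ?\<psi> (-1) * (\<Sum>y\<in>UNIV. ?\<rho> (1 - y) * ?\<psi> y)"
    unfolding sum_distrib_left
  proof (intro sum.cong refl)
    fix y :: 'a
    have "?\<psi> (- y) = ?\<psi> (-1) * ?\<psi> y"
      using mchar_mult[OF c, of "-1" y] by simp
    thus "?\<psi> (- y) * ?\<rho> (1 - y) = ?\<psi> (-1) * (?\<rho> (1 - y) * ?\<psi> y)"
      by (simp only: mult_ac)
  qed
  also have "(\<Sum>y\<in>UNIV. ?\<rho> (1 - y) * ?\<psi> y) = Ksum \<alpha> ?\<psi>"
    unfolding Ksum_def by (rule sum.reindex_bij_witness[of _ "\<lambda>x. 1 - x" "\<lambda>x. 1 - x"]) simp_all
  finally show ?thesis .
qed

lemma one_plus_Ksum_mchar: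
  assumes c: "c ^ T = 1" "c \<noteq> 1"
  shows "1 + Ksum \<alpha> (mchar \<alpha> c) = - mchar \<alpha> c (-1) * (2 * (\<Sum>n\<in>{n\<in>{..<T}. slce \<alpha> n}. c ^ n))"
proof -
  let ?\<psi> = "mchar \<alpha> c" and ?\<rho> = "rho \<alpha>"
  have minus_one: "(\<Sum>n<T. c ^ n * of_bool (\<alpha> ^ n + 1 = 0)) = ?\<psi> (-1)"
  proof -
    have "(\<Sum>n<T. c ^ n * of_bool (\<alpha> ^ n + 1 = 0)) = (\<Sum>x\<in>UNIV. ?\<psi> x * of_bool (x = -1))"
      using sum_mchar_mult[OF c(1)] by (simp add: add_eq_0_iff2)
    also have "\<dots> = ?\<psi> (-1)" by simp
    finally show ?thesis .
  qed
  have "2 * (\<Sum>n\<in>{n\<in>{..<T}. slce \<alpha> n}. c ^ n) = (\<Sum>n<T. c ^ n * (2 * of_bool (slce \<alpha> n)))"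
    unfolding sum.inter_filter[OF finite_lessThan] sum_distrib_left
    by (intro sum.cong refl) simp
  also have "\<dots> = (\<Sum>n<T. c ^ n) - (\<Sum>n<T. c ^ n * ?\<rho> (\<alpha> ^ n + 1))
      - (\<Sum>n<T. c ^ n * of_bool (\<alpha> ^ n + 1 = 0))"
    unfolding twice_slce by (simp add: right_diff_distrib sum_subtractf)
  also have "\<dots> = - ?\<psi> (-1) * (1 + Ksum \<alpha> ?\<psi>)"
    unfolding sum_power_mult_rho[OF c(1)] minus_one sum_power_root_of_unity[OF c]
    by (simp add: distrib_left)
  finally have "- ?\<psi> (-1) * (2 * (\<Sum>n\<in>{n\<in>{..<T}. slce \<alpha> n}. c ^ n))
      = (?\<psi> (-1) * ?\<psi> (-1)) * (1 + Ksum \<alpha> ?\<psi>)"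
    by (simp add: mult.assoc)
  thus ?thesis
    unfolding mchar_minus_1_squared[OF c(1)] by simp
qed

lemma one_plus_Ksum_trivial: "1 + Ksum \<alpha> (mchar \<alpha> 1) = 0"
proof -
  have "(\<Sum>x\<in>UNIV. rho \<alpha> x)
      = (\<Sum>x\<in>UNIV. rho \<alpha> x * mchar \<alpha> 1 (1 - x) + (if x = 1 then rho \<alpha> x else 0))"
    by (intro sum.cong refl) (simp add: mchar_def)
  also have "\<dots> = Ksum \<alpha> (mchar \<alpha> 1) + 1"
    using mchar_power[of "-1" 0] even_T by (simp add: sum.distrib Ksum_def rho_eq_mchar)
  finally have "Ksum \<alpha> (mchar \<alpha> 1) + 1 = (\<Sum>x\<in>UNIV. rho \<alpha> x)" ..
  also have "\<dots> = 0"
    using sum_mchar_mult[of "-1" "\<lambda>_. 1"] even_T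
    by (simp add: rho_eq_mchar sum_power_root_of_unity)
  finally show ?thesis by (simp add: add.commute)
qed

end

section \<open>Residue classes of exponents in characteristic 2\<close>

lemma CHAR_bit_alg_closure: "CHAR(bit alg_closure) = 2"
proof -
  have "CHAR(bit) = 2"
  proof (rule CHAR_eq_posI)
    show "x > 0 \<Longrightarrow> x < 2 \<Longrightarrow> of_nat x \<noteq> (0::bit)" for x
      by (cases x) auto
  qed simp_all
  thus ?thesis by simp
qed

lemma linear_power_CHAR_2:
  fixes x :: "'a::comm_ring_1"
  assumes "CHAR('a) = 2"
  shows "[:-x, 1:] ^ (2 ^ h) = monom 1 (2 ^ h) - [:x ^ (2 ^ h):]"
proof -
  have char_poly: "CHAR('a poly) = 2" using assms by simp
  have "[:-x, 1:] ^ (2 ^ h) = ([:0, 1:] + - [:x:]) ^ (2 ^ h)" by simp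
  also have "\<dots> = [:0, 1:] ^ (2 ^ h) + (- [:x:]) ^ (2 ^ h)"
    using char_poly by (intro freshmans_dream') simp_all
  also have "(- [:x:]) ^ (2 ^ h) = - [:x ^ (2 ^ h):]"
    by (simp only: uminus_CHAR_2[OF char_poly] poly_const_pow)
  finally show ?thesis by (simp add: monom_altdef)
qed

definition poly_residue_part :: "nat \<Rightarrow> nat \<Rightarrow> 'a::zero poly \<Rightarrow> 'a poly" where
  "poly_residue_part m r p = Abs_poly (\<lambda>n. if n mod m = r then coeff p n else 0)"

lemma coeff_poly_residue_part:
  "coeff (poly_residue_part m r p) n = (if n mod m = r then coeff p n else 0)"
  unfolding poly_residue_part_def
  by (subst poly.Abs_poly_inverse) (auto simp: MOST_nat coeff_eq_0 intro: exI[of _ "degree p"])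

lemma poly_residue_part_sum_monom:
  assumes "finite A"
  shows "poly_residue_part m r (\<Sum>n\<in>A. monom (f n) n) = (\<Sum>n\<in>{n\<in>A. n mod m = r}. monom (f n) n)"
  using assms by (intro poly_eqI) (simp add: coeff_poly_residue_part coeff_sum coeff_monom)

lemma poly_residue_part_mult:
  fixes c :: "'a::comm_ring_1"
  assumes "0 < m"
  shows "poly_residue_part m r ((monom 1 m - [:c:]) * p) = (monom 1 m - [:c:]) * poly_residue_part m r p"
proof (rule poly_eqI)
  fix n
  have "(n - m) mod m = n mod m" if "m \<le> n" using that by (simp add: le_mod_geq)
  thus "coeff (poly_residue_part m r ((monom 1 m - [:c:]) * p)) n
      = coeff ((monom 1 m - [:c:]) * poly_residue_part m r p) n"
    by (simp add: coeff_poly_residue_part left_diff_distrib coeff_monom_mult)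
qed

lemma sum_power_residue_class_eq_0:
  fixes x :: "'a::comm_ring_1"
  assumes "0 < m" "finite A" "monom 1 m - [:x ^ m:] dvd (\<Sum>n\<in>A. monom 1 n)"
  shows "(\<Sum>n\<in>{n\<in>A. n mod m = r}. x ^ n) = 0"
proof -
  obtain q where q: "(\<Sum>n\<in>A. monom 1 n) = (monom 1 m - [:x ^ m:]) * q"
    using assms(3) by (elim dvdE)
  have "(\<Sum>n\<in>{n\<in>A. n mod m = r}. x ^ n) = poly (poly_residue_part m r (\<Sum>n\<in>A. monom 1 n)) x"
    using assms(2) by (simp add: poly_residue_part_sum_monom poly_sum poly_monom)
  also have "\<dots> = 0"
    unfolding q poly_residue_part_mult[OF assms(1)] by (simp add: poly_monom)
  finally show ?thesis .
qed

section \<open>The rings \<int>[\<zeta>_N]\<close>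

lemma map_poly_of_int_add:
  "map_poly (of_int :: int \<Rightarrow> 'a::ring_1) (p + q) = map_poly of_int p + map_poly of_int q"
  by (simp add: poly_eq_iff coeff_map_poly)

lemma map_poly_of_int_mult:
  "map_poly (of_int :: int \<Rightarrow> 'a::comm_ring_1) (p * q) = map_poly of_int p * map_poly of_int q"
  by (simp add: poly_eq_iff coeff_map_poly coeff_mult)

lemma Zzeta_add: "x \<in> Zzeta N \<Longrightarrow> y \<in> Zzeta N \<Longrightarrow> x + y \<in> Zzeta N"
  unfolding Zzeta_def by (auto simp flip: poly_add map_poly_of_int_add)

lemma Zzeta_mult: "x \<in> Zzeta N \<Longrightarrow> y \<in> Zzeta N \<Longrightarrow> x * y \<in> Zzeta N"
  unfolding Zzeta_def by (auto simp flip: poly_mult map_poly_of_int_mult)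

lemma Zzeta_of_int: "of_int a \<in> Zzeta N"
  unfolding Zzeta_def by (auto simp: map_poly_pCons intro!: exI[of _ "[:a:]"])

lemma Zzeta_zero: "0 \<in> Zzeta N"
  using Zzeta_of_int[of 0] by simp

lemma Zzeta_zeta: "zeta N \<in> Zzeta N"
  unfolding Zzeta_def by (auto simp: map_poly_pCons intro!: exI[of _ "[:0, 1:]"])

lemma Zzeta_uminus: "x \<in> Zzeta N \<Longrightarrow> - x \<in> Zzeta N"
  using Zzeta_mult[OF Zzeta_of_int[of "-1"]] by simp

lemma Zzeta_power: "x \<in> Zzeta N \<Longrightarrow> x ^ n \<in> Zzeta N"
  by (induction n) (use Zzeta_of_int[of 1] Zzeta_mult in auto)

lemma sum_mem_Zzeta: "(\<And>i. i \<in> A \<Longrightarrow> f i \<in> Zzeta N) \<Longrightarrow> sum f A \<in> Zzeta N"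
  by (induction A rule: infinite_finite_induct) (use Zzeta_zero Zzeta_add in auto)

lemma Zzeta_subset:
  assumes "zeta k \<in> Zzeta N"
  shows "Zzeta k \<subseteq> Zzeta N"
proof
  fix x assume "x \<in> Zzeta k"
  then obtain p where "x = poly (map_poly of_int p) (zeta k)" unfolding Zzeta_def by blast
  moreover have "poly (map_poly of_int p) (zeta k) \<in> Zzeta N"
    by (induction p) (use Zzeta_zero Zzeta_of_int Zzeta_add Zzeta_mult assms in \<open>auto simp: map_poly_pCons\<close>)
  ultimately show "x \<in> Zzeta N" by simp
qed

lemma zeta_mult_power: "0 < a \<Longrightarrow> zeta (a * b) ^ a = zeta b"
  unfolding zeta_def by (simp flip: exp_of_nat_mult)

lemma zeta_power_self: "0 < m \<Longrightarrow> zeta m ^ m = 1"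
  using zeta_mult_power[of m 1] by (simp add: zeta_def)

lemma exp_eq_zeta_power: "exp (2 * of_real pi * \<i> * of_real (real j / real m)) = zeta m ^ j"
proof -
  have "2 * of_real pi * \<i> * of_real (real j / real m) = of_nat j * (2 * of_real pi * \<i> / of_nat m)"
    by simp
  thus ?thesis unfolding zeta_def exp_of_nat_mult[symmetric] by (simp only:)
qed

lemma Zzeta_subset_mult: "0 < m \<Longrightarrow> Zzeta k \<subseteq> Zzeta (m * k)"
  using Zzeta_subset Zzeta_power[OF Zzeta_zeta, of "m * k" m] zeta_mult_power by metis

lemma zeta_mem_Zzeta_mult: "0 < k \<Longrightarrow> zeta m \<in> Zzeta (m * k)"
  using Zzeta_power[OF Zzeta_zeta, of "k * m" k] zeta_mult_power[of k m] by (simp add: mult.commute)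

lemma sum_mem_genideal_zring:
  assumes "finite A" and "\<And>i. i \<in> A \<Longrightarrow> u i \<in> Zzeta N" and "\<And>i. i \<in> A \<Longrightarrow> a i \<in> S"
  shows "(\<Sum>i\<in>A. u i * a i) \<in> genideal (zring N) S"
  unfolding genideal_def
proof (rule InterI)
  fix I assume "I \<in> {I. ideal I (zring N) \<and> S \<subseteq> I}"
  hence I: "ideal I (zring N)" "S \<subseteq> I" by auto
  interpret additive_subgroup I "zring N" using I(1) by (rule ideal.axioms)
  show "(\<Sum>i\<in>A. u i * a i) \<in> I"
    using assms
  proof (induction A rule: finite_induct)
    case empty show ?case using zero_closed by (simp add: zring_def)
  next
    case (insert i A)
    have "u i * a i \<in> I"
      using ideal.I_l_closed[OF I(1)] I(2) insert.prems by (force simp: zring_def)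
    thus ?case using a_closed insert by (simp add: zring_def)
  qed
qed

section \<open>Reduction modulo \<P>\<close>

locale reduction_hom =
  fixes \<beta> :: "'b::field" and \<phi> :: "'b \<Rightarrow> complex set" and k :: nat and P :: "complex set"
    and \<zeta> :: complex
  assumes ideal_P: "ideal P (zring k)"
    and hom: "\<phi> \<in> ring_hom (ring_of_type_algebra\<lparr>carrier := generate_field ring_of_type_algebra {\<beta>}\<rparr>)
                (zring k Quot P)"
    and phi_beta: "\<phi> \<beta> = P +>\<^bsub>zring k\<^esub> \<zeta>"
begin

lemma subring_generated: "subring (generate_field ring_of_type_algebra {\<beta>}) ring_of_type_algebra"
  by (rule subfieldE(1), rule field.generate_field_is_subfield[OF field_from_type_algebra])
     (simp add: ring_of_type_algebra_def)

lemma beta_mem: "\<beta> \<in> generate_field ring_of_type_algebra {\<beta>}"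
  by (rule generate_field.incl) simp

lemma beta_power_mem: "\<beta> ^ n \<in> generate_field ring_of_type_algebra {\<beta>}"
  by (induction n)
     (use subringE(3,6)[OF subring_generated] beta_mem in \<open>auto simp: ring_of_type_algebra_def\<close>)

lemma sum_beta_power_mem: "(\<Sum>n\<in>A. \<beta> ^ n) \<in> generate_field ring_of_type_algebra {\<beta>}"
  by (induction A rule: infinite_finite_induct)
     (use subringE(2,7)[OF subring_generated] beta_power_mem in \<open>auto simp: ring_of_type_algebra_def\<close>)

lemma zero_mem_P: "0 \<in> P"
  using additive_subgroup.zero_closed[OF ideal.axioms(1)[OF ideal_P]] by (simp add: zring_def)

lemma phi_zero: "\<phi> 0 = P"
  using ring_hom_zero[OF hom ring.subring_is_ring[OF ring_from_type_algebra subring_generated]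
      ideal.quotient_is_ring[OF ideal_P]]
  by (auto simp: ring_of_type_algebra_def FactRing_def)

lemma zeta_mem: "\<zeta> \<in> Zzeta k"
proof -
  have "\<phi> \<beta> \<in> a_rcosets\<^bsub>zring k\<^esub> P"
    using ring_hom_closed[OF hom] beta_mem by (force simp: FactRing_def)
  then obtain a where a: "a \<in> Zzeta k" "P +>\<^bsub>zring k\<^esub> \<zeta> = P +>\<^bsub>zring k\<^esub> a"
    unfolding phi_beta A_RCOSETS_def' by (auto simp: zring_def)
  have "\<zeta> \<in> P +>\<^bsub>zring k\<^esub> \<zeta>"
    using zero_mem_P unfolding a_r_coset_def' by (force simp: zring_def)
  hence "\<zeta> \<in> P +>\<^bsub>zring k\<^esub> a"
    unfolding a(2) .
  then obtain p where "p \<in> P" "\<zeta> = p + a"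
    unfolding a_r_coset_def' by (auto simp: zring_def)
  moreover have "P \<subseteq> Zzeta k"
    using additive_subgroup.a_subset[OF ideal.axioms(1)[OF ideal_P]] by (simp add: zring_def)
  ultimately show ?thesis using a(1) Zzeta_add by blast
qed

lemma phi_power: "\<phi> (\<beta> ^ n) = P +>\<^bsub>zring k\<^esub> \<zeta> ^ n"
proof (induction n)
  case 0
  show ?case using ring_hom_one[OF hom] by (simp add: ring_of_type_algebra_def FactRing_def zring_def)
next
  case (Suc n)
  have "\<phi> (\<beta> * \<beta> ^ n) = [mod P:] \<phi> \<beta> \<Otimes>\<^bsub>zring k\<^esub> \<phi> (\<beta> ^ n)"
    using ring_hom_mult[OF hom] beta_mem beta_power_mem
    by (simp add: ring_of_type_algebra_def FactRing_def)
  also have "\<dots> = P +>\<^bsub>zring k\<^esub> (\<zeta> * \<zeta> ^ n)"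
    unfolding phi_beta Suc using ideal.rcoset_mult_add[OF ideal_P] zeta_mem Zzeta_power
    by (simp add: zring_def)
  finally show ?case by simp
qed

lemma phi_sum_power:
  assumes "finite A"
  shows "\<phi> (\<Sum>n\<in>A. \<beta> ^ n) = P +>\<^bsub>zring k\<^esub> (\<Sum>n\<in>A. \<zeta> ^ n)"
  using assms
proof (induction A rule: finite_induct)
  case empty
  show ?case
    using phi_zero ring.a_rcos_zero[OF ideal.axioms(2)[OF ideal_P] ideal_P zero_mem_P]
    by (simp add: zring_def)
next
  case (insert n A)
  have "\<phi> (\<beta> ^ n + (\<Sum>n\<in>A. \<beta> ^ n)) = \<phi> (\<beta> ^ n) <+>\<^bsub>zring k\<^esub> \<phi> (\<Sum>n\<in>A. \<beta> ^ n)"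
    using ring_hom_add[OF hom] beta_power_mem sum_beta_power_mem
    by (simp add: ring_of_type_algebra_def FactRing_def)
  also have "\<dots> = P +>\<^bsub>zring k\<^esub> (\<zeta> ^ n + (\<Sum>n\<in>A. \<zeta> ^ n))"
  proof -
    have "\<zeta> ^ n \<in> Zzeta k" "(\<Sum>n\<in>A. \<zeta> ^ n) \<in> Zzeta k"
      using Zzeta_power[OF zeta_mem] by (auto intro: sum_mem_Zzeta)
    from ideal.a_rcos_sum[OF ideal_P, of "\<zeta> ^ n" "\<Sum>n\<in>A. \<zeta> ^ n"] this show ?thesis
      unfolding phi_power insert.IH by (simp add: zring_def)
  qed
  finally show ?case using insert.hyps by simp
qed

lemma sum_power_mem_ideal:
  assumes "finite A" and "(\<Sum>n\<in>A. \<beta> ^ n) = 0"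
  shows "(\<Sum>n\<in>A. \<zeta> ^ n) \<in> P"
proof (rule ideal.rcos_const_imp_mem[OF ideal_P])
  show "(\<Sum>n\<in>A. \<zeta> ^ n) \<in> carrier (zring k)"
    using Zzeta_power[OF zeta_mem] by (auto intro: sum_mem_Zzeta simp: zring_def)
  show "P +>\<^bsub>zring k\<^esub> (\<Sum>n\<in>A. \<zeta> ^ n) = P"
    using phi_sum_power[OF assms(1)] phi_zero assms(2) by simp
qed

end

section \<open>Residue sums of the SLCE sequence\<close>

lemma dvd_if_power_eq_1:
  fixes x :: "'a::monoid_mult"
  assumes "x ^ n = 1" "x ^ k = 1" "\<forall>d. 0 < d \<and> d < k \<longrightarrow> x ^ d \<noteq> 1" "0 < k"
  shows "k dvd n"
proof -
  have "x ^ (n mod k) = 1" using power_mod_if_power_eq_1[OF assms(2)] assms(1) by simp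
  with assms(3,4) have "n mod k = 0" by (meson mod_less_divisor neq0_conv)
  thus ?thesis by (simp add: dvd_eq_mod_eq_0)
qed

lemma sum_power_mult_root_of_unity:
  fixes \<omega> z :: "'a::comm_ring_1"
  assumes "\<omega> ^ m = 1" "0 < m" "finite N"
  shows "(\<Sum>n\<in>N. (\<omega> * z) ^ n) = (\<Sum>r<m. \<omega> ^ r * (\<Sum>n\<in>{n\<in>N. n mod m = r}. z ^ n))"
proof -
  have "(\<Sum>n\<in>N. (\<omega> * z) ^ n) = (\<Sum>r<m. \<Sum>n\<in>{n\<in>N. n mod m = r}. (\<omega> * z) ^ n)"
    using assms(2,3) by (intro sum.group[symmetric]) auto
  also have "\<dots> = (\<Sum>r<m. \<Sum>n\<in>{n\<in>N. n mod m = r}. \<omega> ^ r * z ^ n)"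
    using power_mod_if_power_eq_1[OF assms(1)] by (intro sum.cong refl) (auto simp: power_mult_distrib)
  also have "\<dots> = (\<Sum>r<m. \<omega> ^ r * (\<Sum>n\<in>{n\<in>N. n mod m = r}. z ^ n))"
    by (simp add: sum_distrib_left)
  finally show ?thesis .
qed

lemma map_poly_to_ac_slce_poly:
  "map_poly to_ac (slce_poly \<alpha>) = (\<Sum>n\<in>{n\<in>{..<card (UNIV :: 'a set) - 1}. slce \<alpha> n}. monom 1 n)"
  for \<alpha> :: "'a::{field,finite}"
  by (rule poly_eqI) (simp add: slce_poly_def coeff_map_poly coeff_sum coeff_monom to_ac_sum)

locale slce_reduction = primitive_root \<alpha> T + reduction_hom \<beta> \<phi> k P \<zeta>
  for \<alpha> :: "'a::{field,finite}" and T :: nat and \<beta> :: "bit alg_closure" and \<phi> k P \<zeta> +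
  assumes k_pos: "0 < k" and zeta_power_T: "\<zeta> ^ T = 1"
begin

lemma residue_class_sum_mem_ideal:
  assumes "Polynomial.order \<beta> (map_poly to_ac (slce_poly \<alpha>)) \<ge> 2 ^ h"
  shows "(\<Sum>n\<in>{n\<in>{n\<in>{..<T}. slce \<alpha> n}. n mod 2 ^ h = r}. \<zeta> ^ n) \<in> P"
proof -
  let ?S = "{n\<in>{..<T}. slce \<alpha> n}"
  have "[:-\<beta>, 1:] ^ 2 ^ h dvd [:-\<beta>, 1:] ^ Polynomial.order \<beta> (map_poly to_ac (slce_poly \<alpha>))"
    using assms by (rule le_imp_power_dvd)
  also have "\<dots> dvd map_poly to_ac (slce_poly \<alpha>)"
    by (rule order_1)
  also have "\<dots> = (\<Sum>n\<in>?S. monom 1 n)"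
    unfolding T_def by (rule map_poly_to_ac_slce_poly)
  finally have "[:-\<beta>, 1:] ^ 2 ^ h dvd (\<Sum>n\<in>?S. monom 1 n)" .
  hence "monom 1 (2 ^ h) - [:\<beta> ^ 2 ^ h:] dvd (\<Sum>n\<in>?S. monom 1 n)"
    unfolding linear_power_CHAR_2[OF CHAR_bit_alg_closure] .
  hence "(\<Sum>n\<in>{n\<in>?S. n mod 2 ^ h = r}. \<beta> ^ n) = 0"
    by (intro sum_power_residue_class_eq_0) auto
  thus ?thesis by (intro sum_power_mem_ideal) auto
qed

lemma one_plus_Ksum_mem_genideal:
  assumes "2 ^ h dvd T" and "Polynomial.order \<beta> (map_poly to_ac (slce_poly \<alpha>)) \<ge> 2 ^ h"
  shows "1 + Ksum \<alpha> (\<lambda>x. eta \<alpha> (real j / 2 ^ h) x * mchar \<alpha> \<zeta> x)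
           \<in> genideal (zring (2 ^ h * k)) ((\<lambda>x. 2 * x) ` P)"
proof -
  define M where "M = (2::nat) ^ h"
  define \<omega> where "\<omega> = zeta M ^ j"
  define c where "c = \<omega> * \<zeta>"
  have M_pos: "0 < M" unfolding M_def by simp
  have omega_M: "\<omega> ^ M = 1"
    using zeta_power_self[OF M_pos] unfolding \<omega>_def by (metis power_mult mult.commute power_one)
  have character: "(\<lambda>x. eta \<alpha> (real j / 2 ^ h) x * mchar \<alpha> \<zeta> x) = mchar \<alpha> c"
    using exp_eq_zeta_power[of j M] unfolding eta_mult_mchar c_def \<omega>_def M_def by simp
  have c_T: "c ^ T = 1"
    using power_mod_if_power_eq_1[OF omega_M, of T] assms(1) zeta_power_T
    by (simp add: c_def M_def power_mult_distrib)
  have omega_mem: "\<omega> \<in> Zzeta (M * k)"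
    unfolding \<omega>_def using zeta_mem_Zzeta_mult[OF k_pos] by (rule Zzeta_power)
  have "c \<in> Zzeta (M * k)"
    using Zzeta_mult[OF omega_mem] Zzeta_subset_mult[OF M_pos] zeta_mem unfolding c_def by blast
  hence "- mchar \<alpha> c (-1) \<in> Zzeta (M * k)"
    unfolding mchar_def by (simp add: Zzeta_uminus Zzeta_power)
  hence coefficient_mem: "- mchar \<alpha> c (-1) * \<omega> ^ r \<in> Zzeta (M * k)" for r
    using Zzeta_mult Zzeta_power[OF omega_mem] by blast
  show ?thesis
  proof (cases "c = 1")
    case True
    thus ?thesis
      using sum_mem_genideal_zring[of "{}"] unfolding character by (simp add: one_plus_Ksum_trivial)
  next
    case False
    have "1 + Ksum \<alpha> (mchar \<alpha> c)
        = - mchar \<alpha> c (-1) * (2 * (\<Sum>r<M. \<omega> ^ r * (\<Sum>n\<in>{n\<in>{n\<in>{..<T}. slce \<alpha> n}. n mod M = r}. \<zeta> ^ n)))"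
      unfolding one_plus_Ksum_mchar[OF c_T False]
      using sum_power_mult_root_of_unity[OF omega_M M_pos, of "{n\<in>{..<T}. slce \<alpha> n}" \<zeta>]
      by (simp add: c_def)
    also have "\<dots> = (\<Sum>r<M. (- mchar \<alpha> c (-1) * \<omega> ^ r)
        * (2 * (\<Sum>n\<in>{n\<in>{n\<in>{..<T}. slce \<alpha> n}. n mod M = r}. \<zeta> ^ n)))"
      by (simp add: sum_distrib_left mult_ac)
    also have "\<dots> \<in> genideal (zring (M * k)) ((\<lambda>x. 2 * x) ` P)"
      using coefficient_mem residue_class_sum_mem_ideal[OF assms(2)]
      by (intro sum_mem_genideal_zring) (auto simp: M_def)
    finally show ?thesis unfolding character M_def .
  qed
qed

end

theorem mainTheorem7:
  fixes \<alpha> :: "'a::{field,finite}"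
    and \<beta> :: "bit alg_closure"
    and k h :: nat
    and P :: "complex set"
    and \<phi> :: "bit alg_closure \<Rightarrow> complex set"
    and \<zeta> :: complex
  assumes q_odd: "odd (card (UNIV :: 'a set))"
    and prim: "\<forall>x::'a. x \<noteq> 0 \<longrightarrow> (\<exists>n. x = \<alpha> ^ n)"
    and beta_T: "\<beta> ^ (card (UNIV :: 'a set) - 1) = 1"
    and k_ord: "\<beta> ^ k = 1" "\<forall>d. 0 < d \<and> d < k \<longrightarrow> \<beta> ^ d \<noteq> 1"
    and k_gt: "k > 1"
    and P_prime: "primeideal P (zring k)"
    and P_two: "2 \<in> P"
    and phi_iso: "\<phi> \<in> ring_iso (F2bar \<lparr> carrier := generate_field F2bar {\<beta>} \<rparr>) (zring k Quot P)"
    and zeta_root: "\<zeta> ^ k = 1"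
    and phi_beta: "\<phi> \<beta> = a_r_coset (zring k) P \<zeta>"
    and h_ge: "1 \<le> h"
    and h_le: "h \<le> multiplicity 2 (card (UNIV :: 'a set) - 1)"
    and mult: "Polynomial.order \<beta> (map_poly to_ac (slce_poly \<alpha>)) \<ge> 2 ^ h"
  shows "\<forall>j < 2 ^ h. 1 + Ksum \<alpha> (\<lambda>x. eta \<alpha> (real j / 2 ^ h) x * mchar \<alpha> \<zeta> x)
           \<in> genideal (zring (2 ^ h * k)) ((\<lambda>x. 2 * x) ` P)"
proof -
  define T where "T = card (UNIV :: 'a set) - 1"
  have "k dvd T"
    using dvd_if_power_eq_1[OF beta_T k_ord] k_gt unfolding T_def by simp
  hence "\<zeta> ^ T = 1"
    using power_mod_if_power_eq_1[OF zeta_root, of T] by simp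
  then interpret slce_reduction \<alpha> T \<beta> \<phi> k P \<zeta>
    using q_odd prim primeideal.axioms(1)[OF P_prime] phi_iso phi_beta k_gt
    by (intro slce_reduction.intro primitive_root.intro reduction_hom.intro
        slce_reduction_axioms.intro) (auto simp: T_def ring_iso_def)
  have "2 ^ h dvd T"
    using h_le T_ge_2 power_dvd_iff_le_multiplicity[of T 2 h] unfolding T_def by simp
  thus ?thesis
    using one_plus_Ksum_mem_genideal[OF _ mult] by blast
qed

end
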